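(* Let $\tau\in\mathbb{Z}$ and let $m=2^\alpha a$, $l=2^\beta b$ with $a,b$ odd positive integers, $\alpha\ge1$, $\beta\ge0$. Then $$2^{2\alpha}\ \Big|\ (-1)^{m\tau+m+l}\binom{m}{l}\binom{m\tau+l-1}{m-1}-(-1)^{\frac{m\tau+m+l}{2}}\binom{m/2}{l/2}\binom{\frac{m\tau+l}{2}-1}{\frac{m}{2}-1},$$ where, when $\beta=0$, the second term is set to zero.
   Context: For integers $b\geq 0$ and $a\in\mathbb{Z}$ the binomial coefficient is defined by: $\binom{a}{b}=1$ if $b=0$; $\binom{a}{b}$ is the usual binomial coefficient if $b\geq 1$ and $a\geq 0$; and $\binom{a}{b}=(-1)^b\binom{-a+b-1}{b}$ if $b\geq1$ and $a<0$. *)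

theory Defs
  imports Main
begin

definition binom :: "int \<Rightarrow> nat \<Rightarrow> int" where
  "binom a b = (if b = 0 then 1
     else if a \<ge> 0 then int (nat a choose b)
     else (-1) ^ b * int (nat (- a + int b - 1) choose b))"

definition neg1pow :: "int \<Rightarrow> int" where
  "neg1pow k = (if even k then 1 else -1)"

end

theory Submission
  imports Defs Complex_Main
begin

text \<open>
  Write \<open>m = 2M\<close>, \<open>l = 2L\<close> and \<open>K = M\<tau> + L\<close>, so that \<open>2^(\<alpha>-1)\<close> divides \<open>M\<close>. Expanding
  factorials gives the duplication formulas \<open>C(2x,2k) (2k-1)!! = C(x,k) (2x-1)(2x-3)\<cdots>(2x-2k+1)\<close>
  and \<open>C(2x-1,2k+1) (2k+1)!! = C(x-1,k) (2x-1)(2x-3)\<cdots>(2x-2k-1)\<close>. After multiplication by the odd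
  number \<open>(2L-1)!! (2M-1)!!\<close> the difference becomes \<open>C(M,L) C(K-1,M-1) (P\<^sub>1 P\<^sub>2 - \<epsilon>\<^sub>1 \<epsilon>\<^sub>2 O\<^sub>1 O\<^sub>2)\<close>
  with odd falling products \<open>P\<^sub>i\<close>, double factorials \<open>O\<^sub>1 = (2L-1)!!\<close>, \<open>O\<^sub>2 = (2M-1)!!\<close> and signs
  \<open>\<epsilon>\<^sub>i\<close>, so it suffices that \<open>2^(2\<alpha>)\<close> divides \<open>C(M,L) C(K-1,M-1) (P\<^sub>i - \<epsilon>\<^sub>i O\<^sub>i)\<close>.
  An odd falling product of even length \<open>k\<close> starting at \<open>2x-1\<close> is congruent to \<open>(2k-1)!!\<close>
  modulo \<open>4x(x-k)\<close>, and there the absorption identities for binomial coefficients turn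
  \<open>x\<close> and \<open>x-k\<close> into multiples of \<open>M\<close>. For odd \<open>k\<close> it is only congruent to \<open>\<plusminus>(2k-1)!!\<close> modulo
  4, but then absorption shows that \<open>2^(\<alpha>-1)\<close> divides both \<open>C(M,L)\<close> and \<open>C(K-1,M-1)\<close>. If \<open>\<beta> = 0\<close>,
  absorption alone shows that both binomial coefficients of the first term are divisible by \<open>2^\<alpha>\<close>.
\<close>

lemma of_int_binom: "(of_int (binom x k) :: 'a :: field_char_0) = of_int x gchoose k"
proof (cases "k = 0 \<or> x \<ge> 0")
  case True
  then have "(of_int (binom x k) :: 'a) = of_nat (nat x) gchoose k"
    by (auto simp: binom_def binomial_gbinomial)
  with True show ?thesis by auto
next
  case False
  then have "(of_int (binom x k) :: 'a) = (-1) ^ k * (of_nat (nat (- x + int k - 1)) gchoose k)"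
    by (simp add: binom_def binomial_gbinomial)
  also have "(of_nat (nat (- x + int k - 1)) :: 'a) = of_nat k - of_int x - 1"
    using False by simp
  finally show ?thesis
    by (simp add: gbinomial_negated_upper[of "of_int x :: 'a" k])
qed

lemma binom_absorption: "int (Suc k) * binom x (Suc k) = x * binom (x - 1) k"
proof -
  have "(of_int (int (Suc k) * binom x (Suc k)) :: rat) = of_int (x * binom (x - 1) k)"
    using gbinomial_absorption[of k "of_int x :: rat"] by (simp add: of_int_binom)
  then show ?thesis by (simp only: of_int_eq_iff)
qed

lemma binom_absorb_comp: "(x - int k) * binom x k = x * binom (x - 1) k"
proof -
  have "(of_int ((x - int k) * binom x k) :: rat) = of_int (x * binom (x - 1) k)"
    using gbinomial_absorb_comp[of "of_int x :: rat" k] by (simp add: of_int_binom)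
  then show ?thesis by (simp only: of_int_eq_iff)
qed

lemma binom_mult_fact: "binom x k * fact k = (\<Prod>i<k. x - int i)"
proof -
  have "(of_int (binom x k * fact k) :: rat) = of_int (\<Prod>i<k. x - int i)"
    using gbinomial_mult_fact'[of "of_int x :: rat" k] by (simp add: of_int_binom atLeast0LessThan)
  then show ?thesis by (simp only: of_int_eq_iff)
qed

lemma binom_mult_Suc: "int (Suc k) * binom y (Suc k) = (y - int k) * binom y k"
  by (simp only: binom_absorption binom_absorb_comp)

lemma dvd_binom_Suc:
  assumes "d dvd x" and "coprime d (int (Suc k))"
  shows "d dvd binom x (Suc k)"
proof -
  have "d dvd int (Suc k) * binom x (Suc k)"
    unfolding binom_absorption using assms(1) by simp
  with assms(2) show ?thesis by (simp add: coprime_dvd_mult_right_iff)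
qed

lemma dvd_binom_pred:
  assumes "d dvd int (Suc k)" and "coprime d x"
  shows "d dvd binom (x - 1) k"
proof -
  have "d dvd x * binom (x - 1) k"
    unfolding binom_absorption[symmetric] using assms(1) by simp
  with assms(2) show ?thesis by (simp add: coprime_dvd_mult_right_iff)
qed

text \<open>\<open>odd_falling (int k) k\<close> is the double factorial \<open>(2k-1)!!\<close>.\<close>

definition odd_falling :: "int \<Rightarrow> nat \<Rightarrow> int" where
  "odd_falling x k = (\<Prod>j<k. 2 * x - 2 * int j - 1)"

lemma odd_falling_0 [simp]: "odd_falling x 0 = 1"
  by (simp add: odd_falling_def)

lemma odd_falling_Suc: "odd_falling x (Suc k) = odd_falling x k * (2 * x - 2 * int k - 1)"
  by (simp add: odd_falling_def)

lemma odd_falling_Suc': "odd_falling x (Suc k) = (2 * x - 1) * odd_falling (x - 1) k"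
  unfolding odd_falling_def by (subst prod.lessThan_Suc_shift) (simp add: algebra_simps)

lemma prod_falling_double:
  "(\<Prod>i<2 * k. 2 * x - int i) = 2 ^ k * (\<Prod>i<k. x - int i) * odd_falling x k"
proof (induction k)
  case (Suc k)
  have "(\<Prod>i<2 * Suc k. 2 * x - int i)
      = (\<Prod>i<2 * k. 2 * x - int i) * (2 * (x - int k)) * (2 * x - 2 * int k - 1)"
    by (simp add: algebra_simps)
  also have "\<dots> = 2 ^ Suc k * ((\<Prod>i<k. x - int i) * (x - int k))
      * (odd_falling x k * (2 * x - 2 * int k - 1))"
    by (simp only: Suc.IH) (simp add: mult_ac)
  finally show ?case
    by (simp only: odd_falling_Suc prod.lessThan_Suc)
qed simp

lemma prod_falling_double_odd:
  "(\<Prod>i<2 * k + 1. 2 * x - 1 - int i) = 2 ^ k * (\<Prod>i<k. x - 1 - int i) * odd_falling x (Suc k)"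
proof (induction k)
  case (Suc k)
  have "(\<Prod>i<2 * Suc k + 1. 2 * x - 1 - int i)
      = (\<Prod>i<2 * k + 1. 2 * x - 1 - int i) * (2 * (x - 1 - int k)) * (2 * x - 2 * int (Suc k) - 1)"
    by (simp add: algebra_simps)
  also have "\<dots> = 2 ^ Suc k * ((\<Prod>i<k. x - 1 - int i) * (x - 1 - int k))
      * (odd_falling x (Suc k) * (2 * x - 2 * int (Suc k) - 1))"
    by (simp only: Suc.IH) (simp add: mult_ac)
  finally show ?case
    by (simp only: odd_falling_Suc[of x "Suc k"] prod.lessThan_Suc)
qed (simp add: odd_falling_def)

lemma prod_falling_self: "(\<Prod>i<k. int k - int i) = fact k"
  using binom_mult_fact[of "int k" k] by (simp add: binom_def split: if_splits)

lemma fact_double: "(fact (2 * k) :: int) = 2 ^ k * fact k * odd_falling (int k) k"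
proof -
  have "(fact (2 * k) :: int) = (\<Prod>i<2 * k. 2 * int k - int i)"
    using prod_falling_self[of "2 * k"] by simp
  then show ?thesis
    by (simp add: prod_falling_double prod_falling_self)
qed

lemma fact_double_odd:
  "(fact (2 * k + 1) :: int) = 2 ^ k * fact k * odd_falling (int (Suc k)) (Suc k)"
proof -
  have "(fact (2 * k + 1) :: int) = (\<Prod>i<2 * k + 1. 2 * int (Suc k) - 1 - int i)"
    using prod_falling_self[of "2 * k + 1"] by (simp add: algebra_simps)
  also have "\<dots> = 2 ^ k * (\<Prod>i<k. int k - int i) * odd_falling (int (Suc k)) (Suc k)"
    by (simp only: prod_falling_double_odd) simp
  finally show ?thesis
    by (simp only: prod_falling_self)
qed

lemma binom_double: "binom (2 * x) (2 * k) * odd_falling (int k) k = binom x k * odd_falling x k"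
proof -
  have "2 ^ k * fact k * (binom (2 * x) (2 * k) * odd_falling (int k) k)
      = binom (2 * x) (2 * k) * fact (2 * k)"
    by (simp only: fact_double) (simp add: mult_ac)
  also have "\<dots> = (\<Prod>i<2 * k. 2 * x - int i)"
    by (rule binom_mult_fact)
  also have "\<dots> = 2 ^ k * (binom x k * fact k) * odd_falling x k"
    by (simp only: prod_falling_double binom_mult_fact)
  finally show ?thesis
    by (simp add: mult_ac)
qed

lemma binom_double_odd:
  "binom (2 * x - 1) (2 * k + 1) * odd_falling (int (Suc k)) (Suc k) = binom (x - 1) k * odd_falling x (Suc k)"
proof -
  have "2 ^ k * fact k * (binom (2 * x - 1) (2 * k + 1) * odd_falling (int (Suc k)) (Suc k))
      = binom (2 * x - 1) (2 * k + 1) * fact (2 * k + 1)"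
    by (simp only: fact_double_odd) (simp add: mult_ac)
  also have "\<dots> = (\<Prod>i<2 * k + 1. 2 * x - 1 - int i)"
    by (rule binom_mult_fact)
  also have "\<dots> = 2 ^ k * (binom (x - 1) k * fact k) * odd_falling x (Suc k)"
    by (simp only: prod_falling_double_odd binom_mult_fact)
  finally show ?thesis
    by (simp add: mult_ac)
qed

lemma dvd_prod_diff:
  fixes f g :: "nat \<Rightarrow> 'a :: comm_ring_1"
  assumes "\<And>i. i < k \<Longrightarrow> d dvd f i - g i"
  shows "d dvd (\<Prod>i<k. f i) - (\<Prod>i<k. g i)"
  using assms
proof (induction k)
  case (Suc k)
  have "(\<Prod>i<Suc k. f i) - (\<Prod>i<Suc k. g i)
      = ((\<Prod>i<k. f i) - (\<Prod>i<k. g i)) * f k + (\<Prod>i<k. g i) * (f k - g k)"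
    by (simp add: algebra_simps)
  with Suc show ?case
    by simp
qed simp

lemma odd_falling_diff_dvd: "2 * (x - y) dvd odd_falling x k - odd_falling y k"
  unfolding odd_falling_def by (rule dvd_prod_diff) (simp add: algebra_simps)

lemma odd_falling_0_left: "odd_falling 0 k = (-1) ^ k * odd_falling (int k) k"
proof -
  have "odd_falling (int k) k = (\<Prod>j<k. 2 * int (k - Suc j) + 1)"
    unfolding odd_falling_def by (rule prod.cong) (auto simp: of_nat_diff)
  also have "\<dots> = (\<Prod>j<k. 2 * int j + 1)"
    by (rule prod.nat_diff_reindex)
  moreover have "odd_falling 0 k = (\<Prod>j<k. (-1) * (2 * int j + 1))"
    unfolding odd_falling_def by (rule prod.cong) simp_all
  ultimately show ?thesis
    by (simp only: prod.distrib prod_constant card_lessThan)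
qed

lemma odd_odd_falling: "odd (odd_falling x k)"
  by (induction k) (simp_all add: odd_falling_Suc)

text \<open>Pair the factors \<open>j\<close> and \<open>2h-1-j\<close>.\<close>

lemma odd_falling_even_eq_prod_squares:
  "odd_falling x (2 * h) = (\<Prod>j<h. (2 * x - 2 * int h)\<^sup>2 - (2 * int j + 1)\<^sup>2)"
proof (induction h arbitrary: x)
  case (Suc h)
  have "odd_falling x (2 * Suc h) = (2 * x - 1) * odd_falling (x - 1) (Suc (2 * h))"
    using odd_falling_Suc'[of x "Suc (2 * h)"] by simp
  also have "\<dots> = (2 * x - 1) * (2 * x - 4 * int h - 3) * odd_falling (x - 1) (2 * h)"
    by (simp add: odd_falling_Suc algebra_simps)
  also have "\<dots> = (2 * x - 1) * (2 * x - 4 * int h - 3)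
      * (\<Prod>j<h. (2 * x - 2 * int (Suc h))\<^sup>2 - (2 * int j + 1)\<^sup>2)"
    using Suc.IH[of "x - 1"] by (simp add: algebra_simps)
  also have "(2 * x - 1) * (2 * x - 4 * int h - 3) = (2 * x - 2 * int (Suc h))\<^sup>2 - (2 * int h + 1)\<^sup>2"
    by (simp add: power2_eq_square algebra_simps)
  also have "\<dots> * (\<Prod>j<h. (2 * x - 2 * int (Suc h))\<^sup>2 - (2 * int j + 1)\<^sup>2)
      = (\<Prod>j<Suc h. (2 * x - 2 * int (Suc h))\<^sup>2 - (2 * int j + 1)\<^sup>2)"
    by (simp only: prod.lessThan_Suc mult.commute)
  finally show ?case .
qed simp

lemma odd_falling_even_dvd:
  assumes "even k"
  shows "4 * x * (x - int k) dvd odd_falling x k - odd_falling (int k) k"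
proof -
  obtain h where k: "k = 2 * h"
    using assms by blast
  have "(2 * x - 2 * int h)\<^sup>2 - (2 * int k - 2 * int h)\<^sup>2
      dvd odd_falling x k - odd_falling (int k) k"
    unfolding k odd_falling_even_eq_prod_squares by (rule dvd_prod_diff) simp
  then show ?thesis
    by (simp add: k power2_eq_square algebra_simps)
qed

definition odd_falling_sign :: "int \<Rightarrow> nat \<Rightarrow> int" where
  "odd_falling_sign x k = (if odd k then neg1pow (x - int k) else 1)"

lemma odd_falling_odd_dvd:
  assumes "odd k"
  shows "4 dvd odd_falling x k - odd_falling_sign x k * odd_falling (int k) k"
proof (cases "even (x - int k)")
  case True
  then obtain c where "x - int k = 2 * c"
    by (rule evenE)
  then have "4 dvd 2 * (x - int k)"
    by simp
  then have "4 dvd odd_falling x k - odd_falling (int k) k"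
    using odd_falling_diff_dvd by (rule dvd_trans)
  moreover have "odd_falling_sign x k = 1"
    using True assms by (simp add: odd_falling_sign_def neg1pow_def)
  ultimately show ?thesis
    by simp
next
  case False
  then have "even (x - int k + int k)"
    using assms by simp
  then obtain c where "x = 2 * c"
    by (auto elim: evenE)
  then have "4 dvd 2 * (x - 0)"
    by simp
  then have "4 dvd odd_falling x k - odd_falling 0 k"
    using odd_falling_diff_dvd by (rule dvd_trans)
  moreover have "odd_falling_sign x k = -1"
    using False assms by (simp add: odd_falling_sign_def neg1pow_def)
  ultimately show ?thesis
    using assms by (simp add: odd_falling_0_left)
qed

lemma coprime_pow2_shift:
  fixes m x y :: int
  assumes "2 ^ p dvd m" and "m dvd y - x" and "odd x"
  shows "coprime (2 ^ p) y"
proof (cases p)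
  case (Suc q)
  then have "even ((2::int) ^ p)"
    by simp
  then have "even m"
    using assms(1) by (rule dvd_trans)
  then have "even (y - x)"
    using assms(2) by (rule dvd_trans)
  with assms(3) show ?thesis
    by simp
qed simp

lemma two_power_double_add_two: "(2::int) ^ (2 * p + 2) = 4 * 2 ^ p * 2 ^ p"
  unfolding mult_2 power_add by simp

lemma pow2_double_dvd_four_sq:
  fixes m :: int
  assumes "2 ^ p dvd m"
  shows "2 ^ (2 * p + 2) dvd 4 * m * m"
  unfolding two_power_double_add_two using assms by (intro mult_dvd_mono) simp_all

lemma neg1pow_eq_odd_falling_sign:
  assumes "int M dvd K - int L"
  shows "neg1pow (K + int M) = odd_falling_sign (int M) L * odd_falling_sign K M"
proof (cases "even M")
  case True
  then have "even (int M)"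
    by simp
  then have "even (K - int L)"
    using assms by (rule dvd_trans)
  then have "even (K + int M) \<longleftrightarrow> even L"
    using True by simp
  moreover have "even (int M - int L) \<longleftrightarrow> even L"
    using True by simp
  ultimately show ?thesis
    using True by (simp add: neg1pow_def odd_falling_sign_def)
next
  case False
  have "even (K + int M) \<longleftrightarrow> even (K - int M)"
    by simp
  with False show ?thesis
    by (simp add: neg1pow_def odd_falling_sign_def)
qed

lemma pow2_dvd_defect_even_binom:
  fixes M L :: nat and K :: int
  assumes pow: "2 ^ p dvd int M" and "0 < M" and cong: "int M dvd K - int L"
  shows "2 ^ (2 * p + 2) dvd binom (int M) L * binom (K - 1) (M - 1)
    * (odd_falling (int M) L - odd_falling_sign (int M) L * odd_falling (int L) L)"
proof (cases "even L")
  case True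
  obtain Y where Y: "odd_falling (int M) L - odd_falling (int L) L = 4 * int M * (int M - int L) * Y"
    using odd_falling_even_dvd[OF True] by blast
  have "binom (int M) L * (odd_falling (int M) L - odd_falling_sign (int M) L * odd_falling (int L) L)
      = 4 * int M * ((int M - int L) * binom (int M) L) * Y"
    using True by (simp add: Y odd_falling_sign_def)
  also have "\<dots> = 4 * int M * int M * (binom (int M - 1) L * Y)"
    by (simp add: binom_absorb_comp)
  finally have "2 ^ (2 * p + 2) dvd binom (int M) L
      * (odd_falling (int M) L - odd_falling_sign (int M) L * odd_falling (int L) L)"
    by (simp only: dvd_mult2[OF pow2_double_dvd_four_sq[OF pow]])
  then have "2 ^ (2 * p + 2) dvd binom (K - 1) (M - 1) * (binom (int M) L
      * (odd_falling (int M) L - odd_falling_sign (int M) L * odd_falling (int L) L))"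
    by (rule dvd_mult)
  then show ?thesis
    by (simp only: mult_ac)
next
  case False
  then obtain L' where L': "L = Suc L'"
    by (cases L) auto
  have "2 ^ p dvd binom (int M) L"
    unfolding L' using pow False L' by (intro dvd_binom_Suc) simp_all
  moreover have "2 ^ p dvd binom (K - 1) (M - 1)"
    using pow \<open>0 < M\<close> coprime_pow2_shift[OF pow cong] False by (intro dvd_binom_pred) simp_all
  moreover have "4 dvd odd_falling (int M) L - odd_falling_sign (int M) L * odd_falling (int L) L"
    using False by (intro odd_falling_odd_dvd) simp
  ultimately have "2 ^ p * 2 ^ p * 4 dvd binom (int M) L * binom (K - 1) (M - 1)
      * (odd_falling (int M) L - odd_falling_sign (int M) L * odd_falling (int L) L)"
    by (intro mult_dvd_mono)
  then show ?thesis
    unfolding two_power_double_add_two by (simp only: ac_simps)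
qed

lemma pow2_dvd_defect_odd_binom:
  fixes M L :: nat and K :: int
  assumes pow: "2 ^ p dvd int M" and "0 < M" and cong: "int M dvd K - int L"
  shows "2 ^ (2 * p + 2) dvd binom (int M) L * binom (K - 1) (M - 1)
    * (odd_falling K M - odd_falling_sign K M * odd_falling (int M) M)"
proof (cases "even M")
  case True
  obtain Y where Y: "odd_falling K M - odd_falling (int M) M = 4 * K * (K - int M) * Y"
    using odd_falling_even_dvd[OF True] by blast
  have "K * binom (int M) L
      = (K - int L) * binom (int M) L + int M * (binom (int M) L - binom (int M - 1) L)"
    using binom_absorb_comp[of "int M" L] by (simp add: algebra_simps)
  then have "int M dvd K * binom (int M) L"
    by (simp only: dvd_add[OF dvd_mult2[OF cong] dvd_triv_left])
  then obtain c where c: "K * binom (int M) L = int M * c"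
    by blast
  have B: "(K - int M) * binom (K - 1) (M - 1) = int M * binom (K - 1) M"
    using binom_mult_Suc[of "M - 1" "K - 1"] \<open>0 < M\<close> by simp
  have "binom (int M) L * binom (K - 1) (M - 1)
      * (odd_falling K M - odd_falling_sign K M * odd_falling (int M) M)
      = 4 * (K * binom (int M) L) * ((K - int M) * binom (K - 1) (M - 1)) * Y"
    using True by (simp add: Y odd_falling_sign_def algebra_simps)
  also have "\<dots> = 4 * int M * int M * (c * binom (K - 1) M * Y)"
    by (simp only: c B) (simp add: mult_ac)
  finally show ?thesis
    by (simp only: dvd_mult2[OF pow2_double_dvd_four_sq[OF pow]])
next
  case False
  have "p = 0"
  proof (rule ccontr)
    assume "p \<noteq> 0"
    then have "even ((2::int) ^ p)"
      by simp
    then have "even (int M)"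
      using pow by (rule dvd_trans)
    with False show False
      by simp
  qed
  have "4 dvd odd_falling K M - odd_falling_sign K M * odd_falling (int M) M"
    using False by (intro odd_falling_odd_dvd) simp
  with \<open>p = 0\<close> show ?thesis
    by simp
qed

lemma pow2_dvd_binom_double_diff:
  fixes M L :: nat and K :: int
  assumes pow: "2 ^ p dvd int M" and "0 < M" and cong: "int M dvd K - int L"
  shows "2 ^ (2 * p + 2) dvd binom (2 * int M) (2 * L) * binom (2 * K - 1) (2 * M - 1)
    - neg1pow (K + int M) * binom (int M) L * binom (K - 1) (M - 1)"
proof -
  define A B where "A = binom (int M) L" and "B = binom (K - 1) (M - 1)"
  define P\<^sub>1 P\<^sub>2 where "P\<^sub>1 = odd_falling (int M) L" and "P\<^sub>2 = odd_falling K M"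
  define O\<^sub>1 O\<^sub>2 where "O\<^sub>1 = odd_falling (int L) L" and "O\<^sub>2 = odd_falling (int M) M"
  define s\<^sub>1 s\<^sub>2 where "s\<^sub>1 = odd_falling_sign (int M) L" and "s\<^sub>2 = odd_falling_sign K M"
  have F\<^sub>1: "binom (2 * int M) (2 * L) * O\<^sub>1 = A * P\<^sub>1"
    unfolding A_def B_def P\<^sub>1_def P\<^sub>2_def O\<^sub>1_def O\<^sub>2_def by (rule binom_double)
  have F\<^sub>2: "binom (2 * K - 1) (2 * M - 1) * O\<^sub>2 = B * P\<^sub>2"
  proof -
    obtain M' where "M = Suc M'"
      using \<open>0 < M\<close> gr0_implies_Suc by blast
    then show ?thesis
      using binom_double_odd[of K M'] by (simp add: B_def P\<^sub>2_def O\<^sub>2_def)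
  qed
  have "(binom (2 * int M) (2 * L) * binom (2 * K - 1) (2 * M - 1) - s\<^sub>1 * s\<^sub>2 * A * B) * (O\<^sub>1 * O\<^sub>2)
      = (binom (2 * int M) (2 * L) * O\<^sub>1) * (binom (2 * K - 1) (2 * M - 1) * O\<^sub>2) - s\<^sub>1 * s\<^sub>2 * A * B * O\<^sub>1 * O\<^sub>2"
    by (simp add: algebra_simps)
  also have "\<dots> = A * B * (P\<^sub>1 - s\<^sub>1 * O\<^sub>1) * P\<^sub>2 + s\<^sub>1 * O\<^sub>1 * (A * B * (P\<^sub>2 - s\<^sub>2 * O\<^sub>2))"
    unfolding F\<^sub>1 F\<^sub>2 by (simp add: algebra_simps)
  finally have expand: "(binom (2 * int M) (2 * L) * binom (2 * K - 1) (2 * M - 1) - s\<^sub>1 * s\<^sub>2 * A * B) * (O\<^sub>1 * O\<^sub>2)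
      = A * B * (P\<^sub>1 - s\<^sub>1 * O\<^sub>1) * P\<^sub>2 + s\<^sub>1 * O\<^sub>1 * (A * B * (P\<^sub>2 - s\<^sub>2 * O\<^sub>2))" .
  have first: "2 ^ (2 * p + 2) dvd A * B * (P\<^sub>1 - s\<^sub>1 * O\<^sub>1)"
    unfolding A_def B_def P\<^sub>1_def P\<^sub>2_def O\<^sub>1_def O\<^sub>2_def s\<^sub>1_def s\<^sub>2_def
    using pow \<open>0 < M\<close> cong by (rule pow2_dvd_defect_even_binom)
  have second: "2 ^ (2 * p + 2) dvd A * B * (P\<^sub>2 - s\<^sub>2 * O\<^sub>2)"
    unfolding A_def B_def P\<^sub>1_def P\<^sub>2_def O\<^sub>1_def O\<^sub>2_def s\<^sub>1_def s\<^sub>2_def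
    using pow \<open>0 < M\<close> cong by (rule pow2_dvd_defect_odd_binom)
  have "odd (O\<^sub>1 * O\<^sub>2)"
    by (simp add: O\<^sub>1_def O\<^sub>2_def odd_odd_falling)
  then have coprime: "coprime (2 ^ (2 * p + 2)) (O\<^sub>1 * O\<^sub>2)"
    by (intro coprime_power_left_iff[THEN iffD2] disjI1) simp
  have "2 ^ (2 * p + 2) dvd
      (binom (2 * int M) (2 * L) * binom (2 * K - 1) (2 * M - 1) - s\<^sub>1 * s\<^sub>2 * A * B) * (O\<^sub>1 * O\<^sub>2)"
    unfolding expand by (rule dvd_add[OF dvd_mult2[OF first] dvd_mult[OF second]])
  then have "2 ^ (2 * p + 2) dvd
      binom (2 * int M) (2 * L) * binom (2 * K - 1) (2 * M - 1) - s\<^sub>1 * s\<^sub>2 * A * B"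
    by (simp only: coprime_dvd_mult_left_iff[OF coprime])
  then show ?thesis
    by (simp add: neg1pow_eq_odd_falling_sign[OF cong] A_def B_def s\<^sub>1_def s\<^sub>2_def mult.assoc)
qed

lemma pow2_dvd_binom_odd_lower:
  fixes m \<tau> :: int and l :: nat
  assumes pow: "2 ^ n dvd m" and "0 < m" and "odd l"
  shows "2 ^ (2 * n) dvd binom m l * binom (m * \<tau> + int l - 1) (nat (m - 1))"
proof -
  obtain l' where l': "l = Suc l'"
    using \<open>odd l\<close> by (cases l) auto
  have "2 ^ n dvd binom m l"
    unfolding l' using pow \<open>odd l\<close> l' by (intro dvd_binom_Suc) simp_all
  moreover have "coprime (2 ^ n) (m * \<tau> + int l)"
    using coprime_pow2_shift[OF pow, of "m * \<tau> + int l" "int l"] \<open>odd l\<close> by simp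
  then have "2 ^ n dvd binom (m * \<tau> + int l - 1) (nat (m - 1))"
    using pow \<open>0 < m\<close> by (intro dvd_binom_pred) simp_all
  ultimately have "2 ^ n * 2 ^ n dvd binom m l * binom (m * \<tau> + int l - 1) (nat (m - 1))"
    by (rule mult_dvd_mono)
  then show ?thesis
    unfolding mult_2 power_add .
qed

lemma pow2_dvd_binom_diff_of_even:
  fixes m l \<tau> :: int and M L :: nat
  assumes m: "m = 2 * int M" and l: "l = 2 * int L" and pow: "2 ^ p dvd int M" and "0 < M"
  shows "2 ^ (2 * p + 2) dvd
    neg1pow (m * \<tau> + m + l) * binom m (nat l) * binom (m * \<tau> + l - 1) (nat (m - 1))
    - neg1pow ((m * \<tau> + m + l) div 2) * binom (m div 2) (nat (l div 2))
      * binom ((m * \<tau> + l) div 2 - 1) (nat (m div 2 - 1))"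
proof -
  define K where "K = int M * \<tau> + int L"
  have "2 ^ (2 * p + 2) dvd binom m (2 * L) * binom (2 * K - 1) (2 * M - 1)
      - neg1pow (K + int M) * binom (int M) L * binom (K - 1) (M - 1)"
    using pow2_dvd_binom_double_diff[OF pow \<open>0 < M\<close>, of K L] by (simp add: K_def m)
  moreover have sum: "m * \<tau> + m + l = 2 * (K + int M)" "m * \<tau> + l = 2 * K"
    by (simp_all add: m l K_def algebra_simps)
  then have "m * \<tau> + l - 1 = 2 * K - 1" "(m * \<tau> + m + l) div 2 = K + int M"
    "(m * \<tau> + l) div 2 - 1 = K - 1" "neg1pow (m * \<tau> + m + l) = 1"
    by (simp_all only: sum) (simp_all add: neg1pow_def)
  moreover have "nat l = 2 * L" "nat (m - 1) = 2 * M - 1" "m div 2 = int M"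
    "nat (l div 2) = L" "nat (int M - 1) = M - 1"
    using \<open>0 < M\<close> by (simp_all add: m l nat_mult_distrib nat_diff_distrib)
  ultimately show ?thesis
    by (simp only: mult_1)
qed

theorem lemma3p3:
  fixes \<tau> m l :: int and \<alpha> \<beta> a b :: nat
  assumes "odd a" and "odd b" and "a > 0" and "b > 0" and "\<alpha> \<ge> 1"
    and "m = 2 ^ \<alpha> * int a" and "l = 2 ^ \<beta> * int b"
  shows "(2::int) ^ (2 * \<alpha>) dvd
    (neg1pow (m * \<tau> + m + l) * binom m (nat l) * binom (m * \<tau> + l - 1) (nat (m - 1))
     - (if \<beta> = 0 then 0
        else neg1pow ((m * \<tau> + m + l) div 2) * binom (m div 2) (nat (l div 2))
             * binom ((m * \<tau> + l) div 2 - 1) (nat (m div 2 - 1))))"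
proof -
  define M where "M = 2 ^ (\<alpha> - 1) * a"
  have "(2::int) ^ \<alpha> = 2 * 2 ^ (\<alpha> - 1)"
    using \<open>\<alpha> \<ge> 1\<close> by (simp flip: power_Suc)
  then have m: "m = 2 * int M"
    using \<open>m = 2 ^ \<alpha> * int a\<close> by (simp add: M_def)
  have "0 < M" and pow: "2 ^ (\<alpha> - 1) dvd int M"
    using \<open>a > 0\<close> by (simp_all add: M_def)
  show ?thesis
  proof (cases "\<beta> = 0")
    case True
    then have l: "l = int b"
      using \<open>l = 2 ^ \<beta> * int b\<close> by simp
    have "2 ^ (2 * \<alpha>) dvd binom m b * binom (m * \<tau> + int b - 1) (nat (m - 1))"
      using \<open>m = 2 ^ \<alpha> * int a\<close> \<open>a > 0\<close> \<open>odd b\<close> by (intro pow2_dvd_binom_odd_lower) simp_all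
    then have "2 ^ (2 * \<alpha>) dvd neg1pow (m * \<tau> + m + l) * (binom m b * binom (m * \<tau> + l - 1) (nat (m - 1)))"
      unfolding l by (rule dvd_mult)
    with True show ?thesis
      by (simp add: l mult.assoc)
  next
    case False
    define L where "L = 2 ^ (\<beta> - 1) * b"
    have "(2::int) ^ \<beta> = 2 * 2 ^ (\<beta> - 1)"
      using False by (simp flip: power_Suc)
    then have l: "l = 2 * int L"
      using \<open>l = 2 ^ \<beta> * int b\<close> by (simp add: L_def)
    have exponent: "2 * (\<alpha> - 1) + 2 = 2 * \<alpha>"
      using \<open>\<alpha> \<ge> 1\<close> by simp
    show ?thesis
      using pow2_dvd_binom_diff_of_even[OF m l pow \<open>0 < M\<close>, of \<tau>, unfolded exponent] False
      by simp
  qed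
qed

end
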